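(* The relaxed log-exp-supremum depends continuously on the input data: for each $n\in\mathbb N$, the map $\mathrm{Sym}(2)^n\to\mathrm{Sym}(2)$, $(X_1,\dots,X_n)\mapsto\mathrm{Sup}_{\mathrm{RLE}}(\{X_1,\dots,X_n\})$, is continuous.
   Context: $\mathrm{Sym}(2)$: real symmetric $2\times2$ matrices. $\mathrm{Sup}_{\mathrm{LE}}(\mathcal X):=\lim_{m\to\infty}\frac1m\log\sum_{X\in\mathcal X}\exp(mX)$. Write $X_i=\lambda_iu_iu_i^{\mathsf T}+\mu_iv_iv_i^{\mathsf T}$ (spectral form, $\lambda_i\ge\mu_i$, orthonormal $u_i,v_i$). The multi-set of bases $\{\{u_i,v_i\}\}_i$ is generic if for no $i\neq j$ the vector $u_i$ is aligned (equal up to sign) with $u_j$. Families $\mathcal X^{(\delta)}$ converge planar to $\mathcal X$ if $X_i^{(\delta)}\to X_i$ as $\delta\to0$ and $X_i^{(\delta)}$ has the same eigenvalues as $X_i$ for all $i,\delta$. The relaxed log-exp-supremum is $\mathrm{Sup}_{\mathrm{RLE}}(\mathcal X):=\mathrm{Sup}_{\mathrm{LE}}(\mathcal X)$ if the bases of $\mathcal X$ are generic, and otherwise $\lim_{\delta\to0}\mathrm{Sup}_{\mathrm{LE}}(\mathcal X^{(\delta)})$ over families converging planar to $\mathcal X$ with generic bases. Equivalently (Theorem 5): with $\lambda_1$ a largest eigenvalue of $\mathcal X$ (eigenvector $u_1$, minor eigenvector $v_1$ of the same matrix) and $\lambda_2$ the next largest eigenvalue in the multi-set of all eigenvalues, $\mathrm{Sup}_{\mathrm{RLE}}(\mathcal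 X)=\lambda_1u_1u_1^{\mathsf T}+\lambda_2v_1v_1^{\mathsf T}$ if $\lambda_1$ occurs once, and $\lambda_1I$ otherwise. *)

theory Defs
  imports "HOL-Analysis.Analysis"
begin

type_synonym mat2 = "real^2^2"

definition sym2 :: "mat2 \<Rightarrow> bool" where
  "sym2 A \<longleftrightarrow> transpose A = A"

fun mat2_pow :: "mat2 \<Rightarrow> nat \<Rightarrow> mat2" where
  "mat2_pow A 0 = mat 1"
| "mat2_pow A (Suc k) = A ** mat2_pow A k"

definition mat2_exp :: "mat2 \<Rightarrow> mat2" where
  "mat2_exp A = (\<Sum>k. (1 / fact k) *\<^sub>R mat2_pow A k)"

text \<open>Matrix logarithm: the unique symmetric logarithm (for symmetric positive definite input).\<close>
definition mat2_log :: "mat2 \<Rightarrow> mat2" where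
  "mat2_log P = (THE S. sym2 S \<and> mat2_exp S = P)"

definition is_eigenvalue2 :: "mat2 \<Rightarrow> real \<Rightarrow> bool" where
  "is_eigenvalue2 A t \<longleftrightarrow> (\<exists>v. v \<noteq> 0 \<and> A *v v = t *\<^sub>R v)"

definition same_eigenvalues :: "mat2 \<Rightarrow> mat2 \<Rightarrow> bool" where
  "same_eigenvalues A B \<longleftrightarrow> (\<forall>t. is_eigenvalue2 A t \<longleftrightarrow> is_eigenvalue2 B t)"

definition major_eigvec :: "mat2 \<Rightarrow> real^2 \<Rightarrow> bool" where
  "major_eigvec A u \<longleftrightarrow> norm u = 1 \<and>
     (\<exists>l. A *v u = l *\<^sub>R u \<and> (\<forall>t. is_eigenvalue2 A t \<longrightarrow> t \<le> l))"

definition generic_bases :: "('n \<Rightarrow> mat2) \<Rightarrow> bool" where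
  "generic_bases X \<longleftrightarrow> (\<exists>u. (\<forall>i. major_eigvec (X i) (u i)) \<and>
       (\<forall>i j. i \<noteq> j \<longrightarrow> u i \<noteq> u j \<and> u i \<noteq> - u j))"

definition Sup_LE :: "('n::finite \<Rightarrow> mat2) \<Rightarrow> mat2" where
  "Sup_LE X = lim (\<lambda>m::nat. (1 / real m) *\<^sub>R mat2_log (\<Sum>i\<in>UNIV. mat2_exp (real m *\<^sub>R X i)))"

definition converges_planar :: "(real \<Rightarrow> 'n \<Rightarrow> mat2) \<Rightarrow> ('n \<Rightarrow> mat2) \<Rightarrow> bool" where
  "converges_planar F X \<longleftrightarrow>
     (\<forall>i. ((\<lambda>\<delta>. F \<delta> i) \<longlongrightarrow> X i) (at_right 0)) \<and>
     (\<forall>\<delta>>0. \<forall>i. sym2 (F \<delta> i) \<and> same_eigenvalues (F \<delta> i) (X i))"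

definition Sup_RLE :: "('n::finite \<Rightarrow> mat2) \<Rightarrow> mat2" where
  "Sup_RLE X = (if generic_bases X then Sup_LE X
     else (THE M. \<forall>F. converges_planar F X \<and> (\<forall>\<delta>>0. generic_bases (F \<delta>)) \<longrightarrow>
                        ((\<lambda>\<delta>. Sup_LE (F \<delta>)) \<longlongrightarrow> M) (at_right 0)))"

end

theory Submission
  imports Defs
begin

text \<open>\<open>Sup\<^sub>R\<^sub>L\<^sub>E\<close> agrees with the closed form \<open>Sup_formula\<close> of Theorem 5, built from the
  largest eigenvalue \<open>\<lambda>\<^sub>1\<close> of the family, the second largest \<open>\<lambda>\<^sub>2\<close> of the eigenvalue
  multiset and the normalised deviator of a matrix attaining \<open>\<lambda>\<^sub>1\<close>; this closed form is
  continuous, because \<open>\<lambda>\<^sub>1, \<lambda>\<^sub>2\<close> are maxima of continuous functions, the maximising index is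
  locally constant where \<open>\<lambda>\<^sub>1 > \<lambda>\<^sub>2\<close>, and the deviator is multiplied by the vanishing gap where
  \<open>\<lambda>\<^sub>1 = \<lambda>\<^sub>2\<close>.

  For generic bases, Rayleigh quotients show that the extreme eigenvalues of \<open>\<Sum>\<^sub>i exp(m X\<^sub>i)\<close>
  are \<open>exp(m \<lambda>\<^sub>1)\<close> and \<open>exp(m \<lambda>\<^sub>2)\<close> up to constant factors (for the smaller one this needs
  two non-aligned major eigenvectors), while \<open>exp(-m \<lambda>\<^sub>1) \<Sum>\<^sub>i exp(m X\<^sub>i)\<close> tends to the projection
  onto the top eigenvector; hence \<open>Sup\<^sub>L\<^sub>E\<close> is the closed form. Non-generic data are approximated
  by rotating the major eigenvectors at distinct speeds, and continuity of the closed form makes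
  every admissible approximation converge to the same value.\<close>

lemma mat2_eq_iff:
  "(A::mat2) = B \<longleftrightarrow> A$1$1 = B$1$1 \<and> A$1$2 = B$1$2 \<and> A$2$1 = B$2$1 \<and> A$2$2 = B$2$2"
  by (auto simp: vec_eq_iff forall_2)

lemma vec2_eq_iff: "(u::real^2) = v \<longleftrightarrow> u$1 = v$1 \<and> u$2 = v$2"
  by (auto simp: vec_eq_iff forall_2)

lemma inner_vec2: "inner (u::real^2) v = u$1 * v$1 + u$2 * v$2"
  by (simp add: inner_vec_def sum_2)

lemma norm_vec2_eq_1_iff: "norm (u::real^2) = 1 \<longleftrightarrow> (u$1)^2 + (u$2)^2 = 1"
  by (simp add: norm_eq_sqrt_inner inner_vec2 power2_eq_square)

lemma matrix_mult2_nth: "((A::mat2) ** B)$i$j = A$i$1 * B$1$j + A$i$2 * B$2$j"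
  by (simp add: matrix_matrix_mult_def sum_2)

lemma matrix_vector_mult2_nth: "((A::mat2) *v v)$i = A$i$1 * v$1 + A$i$2 * v$2"
  by (simp add: matrix_vector_mult_def sum_2)

lemma sym2_iff: "sym2 M \<longleftrightarrow> M$1$2 = M$2$1"
  by (auto simp: sym2_def mat2_eq_iff transpose_def)

definition outer :: "real^2 \<Rightarrow> mat2" where
  "outer u = (\<chi> i j. u$i * u$j)"

text \<open>For a unit vector \<open>u\<close> and \<open>v\<close> orthogonal to it, \<open>spectral a b u\<close> is the matrix
  \<open>a u u\<^sup>T + b v v\<^sup>T\<close> of the spectral form.\<close>
definition spectral :: "real \<Rightarrow> real \<Rightarrow> real^2 \<Rightarrow> mat2" where
  "spectral a b u = b *\<^sub>R mat 1 + (a - b) *\<^sub>R outer u"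

lemma spectral_nth: "spectral a b u $ i $ j = (if i = j then b else 0) + (a - b) * (u$i * u$j)"
  by (simp add: spectral_def outer_def mat_def)

lemma spectral_same [simp]: "spectral a a u = a *\<^sub>R mat 1"
  by (simp add: spectral_def)

lemma scaleR_spectral: "c *\<^sub>R spectral a b u = spectral (c * a) (c * b) u"
  by (simp add: spectral_def algebra_simps)

lemma sym2_spectral: "sym2 (spectral a b u)"
  by (simp add: sym2_iff spectral_nth)

lemma spectral_mult:
  assumes "norm u = 1"
  shows "spectral a b u ** spectral c d u = spectral (a * c) (b * d) u"
proof -
  have u: "(u$1)^2 + (u$2)^2 = 1" using assms by (simp add: norm_vec2_eq_1_iff)
  show ?thesis
    unfolding mat2_eq_iff matrix_mult2_nth spectral_nth by (simp add: algebra_simps) (use u in algebra)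
qed

lemma mat2_pow_spectral:
  assumes "norm u = 1"
  shows "mat2_pow (spectral a b u) k = spectral (a^k) (b^k) u"
  by (induction k) (simp_all add: spectral_mult[OF assms])

lemma mat2_exp_spectral:
  assumes "norm u = 1"
  shows "mat2_exp (spectral a b u) = spectral (exp a) (exp b) u"
proof -
  have "(\<lambda>k. (b^k /\<^sub>R fact k) *\<^sub>R mat 1 + (a^k /\<^sub>R fact k - b^k /\<^sub>R fact k) *\<^sub>R outer u)
      sums (exp b *\<^sub>R mat 1 + (exp a - exp b) *\<^sub>R outer u)"
    by (intro sums_add sums_scaleR_left sums_diff exp_converges)
  moreover have "(1 / fact k) *\<^sub>R mat2_pow (spectral a b u) k =
      (b^k /\<^sub>R fact k) *\<^sub>R mat 1 + (a^k /\<^sub>R fact k - b^k /\<^sub>R fact k) *\<^sub>R outer u" for k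
    unfolding mat2_pow_spectral[OF assms]
    by (simp add: spectral_def algebra_simps divide_simps flip: scaleR_add_left)
  ultimately show ?thesis
    unfolding mat2_exp_def by (simp add: spectral_def sums_iff)
qed

definition perp :: "real^2 \<Rightarrow> real^2" where
  "perp u = vector [- (u$2), u$1]"

lemma perp_nth [simp]: "perp u $ 1 = - (u$2)" "perp u $ 2 = u$1"
  by (simp_all add: perp_def)

lemma norm_perp [simp]: "norm (perp u) = norm u"
  by (simp add: norm_eq_sqrt_inner inner_vec2 algebra_simps)

lemma inner_perp [simp]: "inner u (perp u) = 0"
  by (simp add: inner_vec2 algebra_simps)

lemma outer_perp:
  assumes "norm u = 1"
  shows "outer (perp u) = mat 1 - outer u"
  using assms by (simp add: mat2_eq_iff outer_def mat_def norm_vec2_eq_1_iff algebra_simps power2_eq_square)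

lemma spectral_perp:
  assumes "norm u = 1"
  shows "spectral b a (perp u) = spectral a b u"
  by (simp add: spectral_def outer_perp[OF assms] algebra_simps)

lemma spectral_mulv: "spectral a b u *v v = b *\<^sub>R v + ((a - b) * inner u v) *\<^sub>R u"
  by (simp add: vec2_eq_iff matrix_vector_mult2_nth spectral_nth inner_vec2 algebra_simps)

definition eig_max :: "mat2 \<Rightarrow> real" where
  "eig_max M = (M$1$1 + M$2$2)/2 + sqrt (((M$1$1 - M$2$2)/2)^2 + (M$1$2)^2)"

definition eig_min :: "mat2 \<Rightarrow> real" where
  "eig_min M = (M$1$1 + M$2$2)/2 - sqrt (((M$1$1 - M$2$2)/2)^2 + (M$1$2)^2)"

lemma eig_min_le_eig_max: "eig_min M \<le> eig_max M"
  by (simp add: eig_max_def eig_min_def)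

lemma
  assumes "norm u = 1" "b \<le> a"
  shows eig_max_spectral: "eig_max (spectral a b u) = a"
    and eig_min_spectral: "eig_min (spectral a b u) = b"
proof -
  have u: "(u$1)^2 + (u$2)^2 = 1" using assms(1) by (simp add: norm_vec2_eq_1_iff)
  have "((spectral a b u$1$1 - spectral a b u$2$2)/2)^2 + (spectral a b u$1$2)^2 = ((a - b)/2)^2"
  proof -
    have "((a - b) * (u$1 * u$1) - (a - b) * (u$2 * u$2))^2 + 4 * ((a - b) * (u$1 * u$2))^2 = (a - b)^2"
      using u by algebra
    then show ?thesis unfolding spectral_nth by (simp add: power_divide field_simps)
  qed
  then have "sqrt (((spectral a b u$1$1 - spectral a b u$2$2)/2)^2 + (spectral a b u$1$2)^2) = (a - b)/2"
    using assms(2) by simp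
  moreover have "spectral a b u$1$1 + spectral a b u$2$2 = a + b"
    unfolding spectral_nth by simp (use u in algebra)
  ultimately show "eig_max (spectral a b u) = a" "eig_min (spectral a b u) = b"
    by (simp_all add: eig_max_def eig_min_def field_simps)
qed

lemma exists_unit_double_angle:
  assumes "d^2 + b^2 = r^2" "0 \<le> r"
  shows "\<exists>u::real^2. norm u = 1 \<and> r * ((u$1)^2 - (u$2)^2) = d \<and> 2 * r * (u$1 * u$2) = b"
proof (cases "r = 0")
  case True
  then have "d = 0" "b = 0" using assms(1) by (simp_all add: sum_power2_eq_zero_iff)
  then show ?thesis using True by (intro exI[of _ "vector [1, 0]"]) (simp add: norm_vec2_eq_1_iff)
next
  case False
  then have "(d/r)^2 + (b/r)^2 = 1"
    using assms(1) by (simp add: power_divide flip: add_divide_distrib)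
  then obtain th where "d/r = cos th" "b/r = sin th" using sincos_total_2pi by metis
  then have "d = r * cos th" "b = r * sin th" using False by (simp_all add: field_simps)
  moreover have "cos th = (cos (th/2))^2 - (sin (th/2))^2" "sin th = 2 * sin (th/2) * cos (th/2)"
    using cos_double[of "th/2"] sin_double[of "th/2"] by simp_all
  ultimately show ?thesis
    by (intro exI[of _ "vector [cos (th/2), sin (th/2)]"]) (simp add: norm_vec2_eq_1_iff algebra_simps)
qed

lemma sym2_spectral_decomp:
  assumes "sym2 M"
  obtains u where "norm u = 1" "M = spectral (eig_max M) (eig_min M) u"
proof -
  define t where "t = (M$1$1 + M$2$2)/2"
  define d where "d = (M$1$1 - M$2$2)/2"
  define r where "r = sqrt (d^2 + (M$1$2)^2)"
  obtain u :: "real^2" where u: "norm u = 1" "r * ((u$1)^2 - (u$2)^2) = d" "2 * r * (u$1 * u$2) = M$1$2"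
    using exists_unit_double_angle[of d "M$1$2" r] by (auto simp: r_def)
  have u1: "(u$1)^2 + (u$2)^2 = 1" using u(1) by (simp add: norm_vec2_eq_1_iff)
  have M: "M$1$1 = t + d" "M$2$2 = t - d" "M$2$1 = M$1$2"
    using assms by (simp_all add: t_def d_def sym2_iff field_simps)
  have "M = spectral (t + r) (t - r) u"
    unfolding mat2_eq_iff spectral_nth M
    by (simp add: u(2)[symmetric] u(3)[symmetric] algebra_simps power2_eq_square) (use u1 in algebra)
  moreover have "eig_max M = t + r" "eig_min M = t - r"
    by (simp_all add: eig_max_def eig_min_def t_def d_def r_def)
  ultimately show ?thesis using that u(1) by metis
qed

lemma spectral_trace_det:
  assumes "norm u = 1"
  shows "spectral a b u $1$1 + spectral a b u $2$2 = a + b"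
    and "spectral a b u $1$1 * spectral a b u $2$2 - spectral a b u $1$2 * spectral a b u $2$1 = a * b"
proof -
  have u: "(u$1)^2 + (u$2)^2 = 1" using assms by (simp add: norm_vec2_eq_1_iff)
  show "spectral a b u $1$1 + spectral a b u $2$2 = a + b"
    unfolding spectral_nth by simp (use u in algebra)
  show "spectral a b u $1$1 * spectral a b u $2$2 - spectral a b u $1$2 * spectral a b u $2$1 = a * b"
    unfolding spectral_nth by simp (use u in algebra)
qed

lemma spectral_eq_imp_fun_eq_same:
  assumes "spectral a b w = spectral a b q"
  shows "spectral (g a) (g b) w = spectral (g a) (g b) q"
proof (cases "a = b")
  case False
  then have "outer w = outer q" using assms by (simp add: spectral_def)
  then show ?thesis by (simp add: spectral_def)
qed simp

text \<open>Functional calculus is well defined: a spectral form determines \<open>g\<close> of the matrix.\<close>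
lemma spectral_eq_imp_fun_eq:
  assumes w: "norm w = 1" and q: "norm q = 1" and eq: "spectral x y w = spectral a b q"
  shows "spectral (g x) (g y) w = spectral (g a) (g b) q"
proof -
  have "x + y = a + b" "x * y = a * b"
    using spectral_trace_det[OF w, of x y] spectral_trace_det[OF q, of a b] eq by simp_all
  then have "(x - a) * (x - b) = 0" by algebra
  then consider "x = a" "y = b" | "x = b" "y = a" using \<open>x + y = a + b\<close> by force
  then show ?thesis
  proof cases
    case 1
    then show ?thesis using spectral_eq_imp_fun_eq_same eq by blast
  next
    case 2
    then have "spectral x y w = spectral x y (perp q)" using eq spectral_perp[OF q] by simp
    then have "spectral (g x) (g y) w = spectral (g x) (g y) (perp q)"
      by (rule spectral_eq_imp_fun_eq_same)
    then show ?thesis using 2 spectral_perp[OF q] by simp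
  qed
qed

lemma mat2_log_spectral:
  assumes q: "norm q = 1" and "a > 0" "b > 0"
  shows "mat2_log (spectral a b q) = spectral (ln a) (ln b) q"
  unfolding mat2_log_def
proof (rule the_equality)
  show "sym2 (spectral (ln a) (ln b) q) \<and> mat2_exp (spectral (ln a) (ln b) q) = spectral a b q"
    using assms by (simp add: sym2_spectral mat2_exp_spectral[OF q])
next
  fix S assume S: "sym2 S \<and> mat2_exp S = spectral a b q"
  then obtain w where w: "norm w = 1" "S = spectral (eig_max S) (eig_min S) w"
    using sym2_spectral_decomp by blast
  then have "spectral (exp (eig_max S)) (exp (eig_min S)) w = spectral a b q"
    using S mat2_exp_spectral[OF w(1)] by metis
  from spectral_eq_imp_fun_eq[OF w(1) q this, of ln] w(2) show "S = spectral (ln a) (ln b) q"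
    by simp
qed

lemma inner_sq_le_1:
  assumes "norm u = 1" "norm v = 1"
  shows "(inner u v)^2 \<le> 1"
  using Cauchy_Schwarz_ineq2[of u v] assms by (simp add: abs_square_le_1)

lemma rayleigh_spectral:
  assumes "norm u = 1" "norm v = 1"
  shows "inner v (spectral a b u *v v) = b + (a - b) * (inner u v)^2"
  using assms by (simp add: spectral_mulv inner_add_right inner_commute power2_eq_square dot_square_norm)

lemma
  assumes "norm u = 1" "norm v = 1" "b \<le> a"
  shows rayleigh_spectral_ge: "b \<le> inner v (spectral a b u *v v)"
    and rayleigh_spectral_le: "inner v (spectral a b u *v v) \<le> a"
proof -
  have "0 \<le> (a - b) * (inner u v)^2" "(a - b) * (inner u v)^2 \<le> a - b"
    using inner_sq_le_1[OF assms(1,2)] assms(3) by (simp_all add: mult_left_le)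
  then show "b \<le> inner v (spectral a b u *v v)" "inner v (spectral a b u *v v) \<le> a"
    unfolding rayleigh_spectral[OF assms(1,2)] by simp_all
qed

lemma
  assumes "sym2 M" "norm v = 1"
  shows eig_min_le_rayleigh: "eig_min M \<le> inner v (M *v v)"
    and rayleigh_le_eig_max: "inner v (M *v v) \<le> eig_max M"
proof -
  obtain u where "norm u = 1" "M = spectral (eig_max M) (eig_min M) u"
    using sym2_spectral_decomp[OF assms(1)] .
  then show "eig_min M \<le> inner v (M *v v)" "inner v (M *v v) \<le> eig_max M"
    using rayleigh_spectral_ge rayleigh_spectral_le assms(2) eig_min_le_eig_max by metis+
qed

lemma
  assumes "sym2 M"
  shows eig_max_rayleigh_attained: "\<exists>v. norm v = 1 \<and> inner v (M *v v) = eig_max M"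
    and eig_min_rayleigh_attained: "\<exists>v. norm v = 1 \<and> inner v (M *v v) = eig_min M"
proof -
  obtain u where u: "norm u = 1" "M = spectral (eig_max M) (eig_min M) u"
    using sym2_spectral_decomp[OF assms] .
  have "inner u (spectral (eig_max M) (eig_min M) u *v u) = eig_max M"
    "inner (perp u) (spectral (eig_max M) (eig_min M) u *v perp u) = eig_min M"
    using rayleigh_spectral[OF u(1) u(1)] rayleigh_spectral[OF u(1), of "perp u"] u(1)
    by (simp_all add: dot_square_norm)
  then have "inner u (M *v u) = eig_max M" "inner (perp u) (M *v perp u) = eig_min M"
    unfolding u(2)[symmetric] .
  then show "\<exists>v. norm v = 1 \<and> inner v (M *v v) = eig_max M"
    "\<exists>v. norm v = 1 \<and> inner v (M *v v) = eig_min M"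
    using u(1) norm_perp by metis+
qed

lemma is_eigenvalue2_spectral:
  assumes u: "norm u = 1"
  shows "is_eigenvalue2 (spectral a b u) t \<longleftrightarrow> t = a \<or> t = b"
proof
  assume "is_eigenvalue2 (spectral a b u) t"
  then obtain v where v: "v \<noteq> 0" "spectral a b u *v v = t *\<^sub>R v"
    by (auto simp: is_eigenvalue2_def)
  then have e: "(t - b) *\<^sub>R v = ((a - b) * inner u v) *\<^sub>R u"
    unfolding spectral_mulv by (simp add: algebra_simps)
  have "(t - b) * inner u v = (a - b) * inner u v"
    using arg_cong[OF e, of "inner u"] u by (simp add: dot_square_norm)
  moreover have "(t - b) * inner (perp u) v = 0"
    using arg_cong[OF e, of "inner (perp u)"] by (simp add: inner_commute)
  moreover have "(inner u v)^2 + (inner (perp u) v)^2 = (norm v)^2"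
    using u by (simp add: norm_eq_sqrt_inner inner_vec2 norm_vec2_eq_1_iff) algebra
  ultimately show "t = a \<or> t = b"
    using v(1) by (auto simp: power2_eq_square)
next
  have "spectral a b u *v u = a *\<^sub>R u" "spectral a b u *v perp u = b *\<^sub>R perp u"
    using u by (simp_all add: spectral_mulv dot_square_norm algebra_simps)
  moreover have "u \<noteq> 0" "perp u \<noteq> 0"
    using u norm_perp[of u] by (auto simp del: norm_perp)
  ultimately show "t = a \<or> t = b \<Longrightarrow> is_eigenvalue2 (spectral a b u) t"
    unfolding is_eigenvalue2_def by blast
qed

lemma major_eigvec_spectral:
  assumes "norm u = 1" "b \<le> a"
  shows "major_eigvec (spectral a b u) u"
proof -
  have "spectral a b u *v u = a *\<^sub>R u"
    using assms(1) by (simp add: spectral_mulv dot_square_norm algebra_simps)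
  then show ?thesis
    unfolding major_eigvec_def using assms is_eigenvalue2_spectral[OF assms(1)] by auto
qed

lemma outer_scaleR: "outer (c *\<^sub>R u) = c^2 *\<^sub>R outer u"
  by (simp add: outer_def vec_eq_iff power2_eq_square algebra_simps)

lemma spectral_major_eigvec:
  assumes "sym2 X" "major_eigvec X u"
  shows "X = spectral (eig_max X) (eig_min X) u"
proof -
  obtain w where w: "norm w = 1" "X = spectral (eig_max X) (eig_min X) w"
    using sym2_spectral_decomp[OF assms(1)] .
  obtain l where u: "norm u = 1" "X *v u = l *\<^sub>R u" "\<forall>t. is_eigenvalue2 X t \<longrightarrow> t \<le> l"
    using assms(2) unfolding major_eigvec_def by blast
  have "is_eigenvalue2 (spectral (eig_max X) (eig_min X) w) t \<longleftrightarrow> t = eig_max X \<or> t = eig_min X" for t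
    by (rule is_eigenvalue2_spectral[OF w(1)])
  then have ev: "is_eigenvalue2 X t \<longleftrightarrow> t = eig_max X \<or> t = eig_min X" for t
    unfolding w(2)[symmetric] .
  have "u \<noteq> 0" using u(1) by auto
  then have "is_eigenvalue2 X l" using u(2) unfolding is_eigenvalue2_def by blast
  then have l: "l = eig_max X" using u(3) ev eig_min_le_eig_max[of X] by force
  show ?thesis
  proof (cases "eig_max X = eig_min X")
    case True
    then show ?thesis using w by simp
  next
    case False
    have "spectral (eig_max X) (eig_min X) w *v u = eig_max X *\<^sub>R u"
      using u(2) unfolding l w(2)[symmetric] .
    then have "(eig_max X - eig_min X) *\<^sub>R (inner w u *\<^sub>R w) = (eig_max X - eig_min X) *\<^sub>R u"
      unfolding spectral_mulv by (simp add: algebra_simps)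
    then have uw: "u = inner w u *\<^sub>R w" using False by (simp only: scaleR_cancel_left) simp
    have "norm u = \<bar>inner w u\<bar> * norm w" using arg_cong[OF uw, of norm] by (simp only: norm_scaleR)
    then have "(inner w u)^2 = 1" using u(1) w(1) by (simp add: abs_square_eq_1)
    moreover have "outer u = outer (inner w u *\<^sub>R w)" using uw by (rule arg_cong)
    ultimately have "outer u = outer w" by (simp add: outer_scaleR)
    then show ?thesis using w by (simp add: spectral_def)
  qed
qed

text \<open>\<open>dev M\<close> is the deviator (traceless part) of \<open>M\<close> normalised to unit eigenvalue gap, i.e.\
  \<open>u u\<^sup>T - I/2\<close> for the major eigenvector \<open>u\<close>; it is \<open>0\<close> when the eigenvalues coincide,
  by division by zero.\<close>
definition dev :: "mat2 \<Rightarrow> mat2" where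
  "dev M = (1 / (eig_max M - eig_min M)) *\<^sub>R (M - ((eig_max M + eig_min M)/2) *\<^sub>R mat 1)"

definition mat_of_dev :: "real \<Rightarrow> real \<Rightarrow> mat2 \<Rightarrow> mat2" where
  "mat_of_dev a b D = ((a + b)/2) *\<^sub>R mat 1 + (a - b) *\<^sub>R D"

lemma mat_of_dev_same [simp]: "mat_of_dev a a D = a *\<^sub>R mat 1"
  by (simp add: mat_of_dev_def)

lemma scaleR_mat_of_dev: "c *\<^sub>R mat_of_dev a b D = mat_of_dev (c * a) (c * b) D"
  by (simp add: mat_of_dev_def algebra_simps)

lemma spectral_eq_mat_of_dev: "spectral a b u = mat_of_dev a b (outer u - (1/2) *\<^sub>R mat 1)"
  by (simp add: mat2_eq_iff spectral_nth mat_of_dev_def outer_def mat_def field_simps)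

lemma dev_spectral:
  assumes "norm u = 1" "b < a"
  shows "dev (spectral a b u) = outer u - (1/2) *\<^sub>R mat 1"
proof -
  have "spectral a b u - ((a + b)/2) *\<^sub>R mat 1 = (a - b) *\<^sub>R (outer u - (1/2) *\<^sub>R mat 1)"
    by (simp add: mat2_eq_iff spectral_nth outer_def mat_def field_simps)
  then show ?thesis
    using assms by (simp add: dev_def eig_max_spectral eig_min_spectral)
qed

lemma mat2_log_eq_mat_of_dev:
  assumes "sym2 P" "eig_min P > 0"
  shows "mat2_log P = mat_of_dev (ln (eig_max P)) (ln (eig_min P)) (dev P)"
proof -
  obtain q where q: "norm q = 1" "P = spectral (eig_max P) (eig_min P) q"
    using sym2_spectral_decomp[OF assms(1)] .
  have "eig_max P > 0" using assms(2) eig_min_le_eig_max[of P] by linarith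
  then have log: "mat2_log P = spectral (ln (eig_max P)) (ln (eig_min P)) q"
    using mat2_log_spectral[OF q(1) _ assms(2)] q(2) by metis
  show ?thesis
  proof (cases "eig_max P = eig_min P")
    case True
    then show ?thesis unfolding log by simp
  next
    case False
    then have "dev (spectral (eig_max P) (eig_min P) q) = outer q - (1/2) *\<^sub>R mat 1"
      using dev_spectral[OF q(1)] eig_min_le_eig_max[of P] by simp
    then have "dev P = outer q - (1/2) *\<^sub>R mat 1"
      unfolding q(2)[symmetric] .
    then show ?thesis
      unfolding log spectral_eq_mat_of_dev by simp
  qed
qed

lemma
  assumes "c \<ge> 0"
  shows eig_max_scaleR: "eig_max (c *\<^sub>R M) = c * eig_max M"
    and eig_min_scaleR: "eig_min (c *\<^sub>R M) = c * eig_min M"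
proof -
  have "((c * M$1$1 - c * M$2$2)/2)^2 + (c * M$1$2)^2 = c^2 * (((M$1$1 - M$2$2)/2)^2 + (M$1$2)^2)"
    by (simp add: algebra_simps power2_eq_square)
  then have "sqrt (((c * M$1$1 - c * M$2$2)/2)^2 + (c * M$1$2)^2)
      = c * sqrt (((M$1$1 - M$2$2)/2)^2 + (M$1$2)^2)"
    using assms by (simp add: real_sqrt_mult)
  then show "eig_max (c *\<^sub>R M) = c * eig_max M" "eig_min (c *\<^sub>R M) = c * eig_min M"
    by (simp_all add: eig_max_def eig_min_def algebra_simps)
qed

lemma dev_scaleR:
  assumes "c > 0"
  shows "dev (c *\<^sub>R M) = dev M"
proof -
  have "c *\<^sub>R M - ((c * eig_max M + c * eig_min M)/2) *\<^sub>R mat 1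
      = c *\<^sub>R (M - ((eig_max M + eig_min M)/2) *\<^sub>R mat 1)"
    by (simp add: algebra_simps)
  moreover have "1 / (c * eig_max M - c * eig_min M) * c = 1 / (eig_max M - eig_min M)"
    using assms by (simp add: right_diff_distrib[symmetric])
  ultimately show ?thesis
    using assms by (simp add: dev_def eig_max_scaleR eig_min_scaleR)
qed

lemma norm_mat2_le: "norm (M::mat2) \<le> \<bar>M$1$1\<bar> + \<bar>M$1$2\<bar> + \<bar>M$2$1\<bar> + \<bar>M$2$2\<bar>"
proof -
  have "norm M \<le> (\<Sum>i\<in>UNIV. norm (M$i))" by (simp add: norm_vec_def L2_set_le_sum)
  also have "\<dots> \<le> (\<Sum>i\<in>UNIV. \<Sum>j\<in>UNIV. \<bar>M$i$j\<bar>)" by (intro sum_mono norm_le_l1_cart)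
  finally show ?thesis by (simp add: sum_2 algebra_simps)
qed

lemma norm_dev_le:
  assumes "sym2 M"
  shows "norm (dev M) \<le> 2"
proof (cases "eig_max M = eig_min M")
  case True
  then show ?thesis by (simp add: dev_def)
next
  case False
  obtain u where u: "norm u = 1" "M = spectral (eig_max M) (eig_min M) u"
    using sym2_spectral_decomp[OF assms] .
  then have dev: "dev M = outer u - (1/2) *\<^sub>R mat 1"
    using dev_spectral[OF u(1)] False eig_min_le_eig_max[of M] by (metis order_le_imp_less_or_eq)
  have u1: "(u$1)^2 + (u$2)^2 = 1" using u(1) by (simp add: norm_vec2_eq_1_iff)
  then have "\<bar>(u$1)^2 - 1/2\<bar> \<le> 1/2" "\<bar>(u$2)^2 - 1/2\<bar> \<le> 1/2"
    using zero_le_power2[of "u$1"] zero_le_power2[of "u$2"]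
    by (simp_all only: abs_le_iff) (intro conjI; linarith)+
  moreover have "\<bar>u$1 * u$2\<bar> \<le> 1/2"
    using u1 sum_squares_bound[of "\<bar>u$1\<bar>" "\<bar>u$2\<bar>"] by (simp add: abs_mult)
  ultimately show ?thesis
    using norm_mat2_le[of "dev M"] unfolding dev
    by (simp add: outer_def mat_def power2_eq_square mult.commute)
qed

lemma tendsto_eig_max: "(f \<longlongrightarrow> M) F \<Longrightarrow> ((\<lambda>x. eig_max (f x)) \<longlongrightarrow> eig_max M) F"
  unfolding eig_max_def by (intro tendsto_intros tendsto_vec_nth) auto

lemma tendsto_eig_min: "(f \<longlongrightarrow> M) F \<Longrightarrow> ((\<lambda>x. eig_min (f x)) \<longlongrightarrow> eig_min M) F"
  unfolding eig_min_def by (intro tendsto_intros tendsto_vec_nth) auto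

lemma tendsto_dev:
  assumes "(f \<longlongrightarrow> M) F" "eig_min M \<noteq> eig_max M"
  shows "((\<lambda>x. dev (f x)) \<longlongrightarrow> dev M) F"
  unfolding dev_def using assms by (intro tendsto_intros tendsto_eig_max tendsto_eig_min) auto

text \<open>At a double eigenvalue the deviator need not converge; it is killed by the vanishing gap.\<close>
lemma tendsto_mat_of_dev:
  assumes a: "(a \<longlongrightarrow> l1) F" and b: "(b \<longlongrightarrow> l2) F" and "l2 \<le> l1"
    and bounded: "eventually (\<lambda>x. norm (D x) \<le> C) F"
    and D: "l2 < l1 \<Longrightarrow> (D \<longlongrightarrow> D0) F"
  shows "((\<lambda>x. mat_of_dev (a x) (b x) (D x)) \<longlongrightarrow> mat_of_dev l1 l2 D0) F"
proof -
  have mid: "((\<lambda>x. ((a x + b x)/2) *\<^sub>R (mat 1 :: mat2)) \<longlongrightarrow> ((l1 + l2)/2) *\<^sub>R mat 1) F"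
    using a b by (intro tendsto_scaleR tendsto_const) (simp add: tendsto_add tendsto_divide)
  show ?thesis
  proof (cases "l2 < l1")
    case True
    then show ?thesis
      unfolding mat_of_dev_def by (intro tendsto_add mid tendsto_scaleR tendsto_diff a b D)
  next
    case False
    then have l: "l2 = l1" using \<open>l2 \<le> l1\<close> by simp
    have "((\<lambda>x. (a x - b x) *\<^sub>R D x) \<longlongrightarrow> 0) F"
    proof (rule Lim_null_comparison)
      show "eventually (\<lambda>x. norm ((a x - b x) *\<^sub>R D x) \<le> \<bar>a x - b x\<bar> * C) F"
        using bounded by eventually_elim (simp add: mult_left_mono)
      have "((\<lambda>x. \<bar>a x - b x\<bar> * C) \<longlongrightarrow> \<bar>l1 - l2\<bar> * C) F" by (intro tendsto_intros a b)
      then show "((\<lambda>x. \<bar>a x - b x\<bar> * C) \<longlongrightarrow> 0) F" using l by simp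
    qed
    from tendsto_add[OF mid this] show ?thesis unfolding mat_of_dev_def l by simp
  qed
qed

text \<open>The multiset of all eigenvalues of the family is indexed by the slots \<open>(i, True)\<close>
  and \<open>(i, False)\<close>; \<open>second_eig\<close> is its second largest element, counted with multiplicity.\<close>
definition eig_slot :: "('n \<Rightarrow> mat2) \<Rightarrow> 'n \<times> bool \<Rightarrow> real" where
  "eig_slot X p = (if snd p then eig_max (X (fst p)) else eig_min (X (fst p)))"

definition top_eig :: "('n::finite \<Rightarrow> mat2) \<Rightarrow> real" where
  "top_eig X = Max (range (\<lambda>i. eig_max (X i)))"

definition second_eig :: "('n::finite \<Rightarrow> mat2) \<Rightarrow> real" where
  "second_eig X = Max ((\<lambda>(p, q). min (eig_slot X p) (eig_slot X q)) ` {(p, q). p \<noteq> q})"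

definition top_index :: "('n::finite \<Rightarrow> mat2) \<Rightarrow> 'n" where
  "top_index X = (SOME k. eig_max (X k) = top_eig X)"

text \<open>The closed form of \<open>Sup\<^sub>R\<^sub>L\<^sub>E\<close> (Theorem 5): \<open>\<lambda>\<^sub>1 u u\<^sup>T + \<lambda>\<^sub>2 v v\<^sup>T\<close> if \<open>\<lambda>\<^sub>1\<close> is simple,
  and \<open>\<lambda>\<^sub>1 I\<close> otherwise, where \<open>second_eig X = top_eig X\<close> makes the choice of \<open>top_index\<close>
  irrelevant.\<close>
definition Sup_formula :: "('n::finite \<Rightarrow> mat2) \<Rightarrow> mat2" where
  "Sup_formula X = mat_of_dev (top_eig X) (second_eig X) (dev (X (top_index X)))"

lemma distinct_pairs_nonempty: "{(p :: 'a \<times> bool, q). p \<noteq> q} \<noteq> {}"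
proof -
  obtain i :: 'a where True by blast
  then have "((i, True), (i, False)) \<in> {(p, q). p \<noteq> q}" by simp
  then show ?thesis by (metis empty_iff)
qed

lemma second_eig_attained:
  "\<exists>p q. p \<noteq> q \<and> second_eig X = min (eig_slot X p) (eig_slot X q)"
proof -
  have "second_eig X \<in> (\<lambda>(p, q). min (eig_slot X p) (eig_slot X q)) ` {(p, q). p \<noteq> q}"
    unfolding second_eig_def by (rule Max_in) (use distinct_pairs_nonempty in auto)
  then show ?thesis by auto
qed

lemma eig_max_le_top_eig: "eig_max (X i) \<le> top_eig X"
  unfolding top_eig_def by (rule Max_ge) auto

lemma eig_slot_le_top_eig: "eig_slot X p \<le> top_eig X"
  using eig_max_le_top_eig[of X "fst p"] eig_min_le_eig_max[of "X (fst p)"]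
  by (auto simp: eig_slot_def)

lemma eig_max_top_index: "eig_max (X (top_index X)) = top_eig X"
proof -
  have "top_eig X \<in> range (\<lambda>i. eig_max (X i))" unfolding top_eig_def by (rule Max_in) auto
  then show ?thesis unfolding top_index_def by (metis (mono_tags) imageE someI)
qed

lemma second_eig_le_top_eig: "second_eig X \<le> top_eig X"
  using second_eig_attained[of X] eig_slot_le_top_eig[of X] by (metis min.coboundedI1)

lemma eig_slot_le_second_eig:
  assumes "eig_max (X k) = top_eig X" "p \<noteq> (k, True)"
  shows "eig_slot X p \<le> second_eig X"
proof -
  have "min (eig_slot X p) (eig_slot X (k, True)) \<le> second_eig X"
    unfolding second_eig_def by (rule Max_ge) (use assms(2) in force)+
  then show ?thesis using assms(1) eig_slot_le_top_eig[of X p] by (simp add: eig_slot_def)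
qed

lemma second_eig_cases:
  assumes "eig_max (X k) = top_eig X"
  shows "second_eig X \<le> eig_min (X k) \<or> (\<exists>j. j \<noteq> k \<and> second_eig X \<le> eig_max (X j))"
proof -
  obtain p q where pq: "p \<noteq> q" "second_eig X = min (eig_slot X p) (eig_slot X q)"
    using second_eig_attained by blast
  then obtain r where r: "r \<noteq> (k, True)" "second_eig X \<le> eig_slot X r"
    by (metis min.cobounded1 min.cobounded2)
  then show ?thesis
    using eig_min_le_eig_max[of "X (fst r)"] unfolding eig_slot_def
    by (cases r) (auto split: if_splits)
qed

lemma tendsto_Max_finite:
  fixes f :: "'s \<Rightarrow> 'a \<Rightarrow> real"
  assumes "finite S" "S \<noteq> {}" "\<And>s. s \<in> S \<Longrightarrow> ((\<lambda>x. f s x) \<longlongrightarrow> l s) F"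
  shows "((\<lambda>x. Max ((\<lambda>s. f s x) ` S)) \<longlongrightarrow> Max (l ` S)) F"
  using assms
proof (induction S rule: finite_ne_induct)
  case (insert s S)
  then have "((\<lambda>x. max (f s x) (Max ((\<lambda>s. f s x) ` S))) \<longlongrightarrow> max (l s) (Max (l ` S))) F"
    by (intro tendsto_max) auto
  then show ?case using insert by simp
qed simp

context
  fixes Y :: "'a \<Rightarrow> 'n::finite \<Rightarrow> mat2" and X :: "'n \<Rightarrow> mat2" and F :: "'a filter"
  assumes lim: "\<And>i. ((\<lambda>x. Y x i) \<longlongrightarrow> X i) F"
begin

lemma tendsto_eig_slot: "((\<lambda>x. eig_slot (Y x) p) \<longlongrightarrow> eig_slot X p) F"
  unfolding eig_slot_def by (cases "snd p") (auto intro: tendsto_eig_max tendsto_eig_min lim)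

lemma tendsto_top_eig: "((\<lambda>x. top_eig (Y x)) \<longlongrightarrow> top_eig X) F"
  unfolding top_eig_def by (intro tendsto_Max_finite tendsto_eig_max lim) auto

lemma tendsto_second_eig: "((\<lambda>x. second_eig (Y x)) \<longlongrightarrow> second_eig X) F"
  unfolding second_eig_def
  by (intro tendsto_Max_finite)
     (auto simp: distinct_pairs_nonempty case_prod_beta intro!: tendsto_min tendsto_eig_slot)

lemma eventually_top_index_eq:
  assumes "second_eig X < top_eig X"
  shows "eventually (\<lambda>x. top_index (Y x) = top_index X) F"
proof -
  define k where "k = top_index X"
  have k: "eig_max (X k) = top_eig X" unfolding k_def by (rule eig_max_top_index)
  have "eventually (\<lambda>x. eig_slot (Y x) p < eig_slot (Y x) (k, True)) F" if "p \<noteq> (k, True)" for p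
  proof (rule order_tendstoD(1)[OF tendsto_diff[OF tendsto_eig_slot tendsto_eig_slot], of 0,
        simplified])
    show "eig_slot X p < eig_slot X (k, True)"
      using eig_slot_le_second_eig[OF k that] assms k by (simp add: eig_slot_def)
  qed
  then have "eventually (\<lambda>x. \<forall>p. p \<noteq> (k, True) \<longrightarrow> eig_slot (Y x) p < eig_slot (Y x) (k, True)) F"
    by (intro eventually_all_finite) (auto intro: eventually_mono)
  then show ?thesis
  proof eventually_elim
    case (elim x)
    have "eig_max (Y x k) \<le> eig_max (Y x (top_index (Y x)))"
      unfolding eig_max_top_index by (rule eig_max_le_top_eig)
    then show "top_index (Y x) = top_index X"
      using elim[rule_format, of "(top_index (Y x), True)"] unfolding k_def[symmetric]
      by (force simp: eig_slot_def)
  qed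
qed

lemma tendsto_Sup_formula:
  assumes sym: "eventually (\<lambda>x. \<forall>i. sym2 (Y x i)) F"
  shows "((\<lambda>x. Sup_formula (Y x)) \<longlongrightarrow> Sup_formula X) F"
  unfolding Sup_formula_def
proof (rule tendsto_mat_of_dev[OF tendsto_top_eig tendsto_second_eig second_eig_le_top_eig])
  show "eventually (\<lambda>x. norm (dev (Y x (top_index (Y x)))) \<le> 2) F"
    using sym by eventually_elim (simp add: norm_dev_le)
next
  assume gap: "second_eig X < top_eig X"
  have "eig_min (X (top_index X)) \<le> second_eig X"
    using eig_slot_le_second_eig[of X "top_index X" "(top_index X, False)"]
    by (simp add: eig_slot_def eig_max_top_index)
  then have "eig_min (X (top_index X)) \<noteq> eig_max (X (top_index X))"
    using gap eig_max_top_index[of X] by simp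
  then have "((\<lambda>x. dev (Y x (top_index X))) \<longlongrightarrow> dev (X (top_index X))) F"
    by (intro tendsto_dev lim)
  moreover have "eventually (\<lambda>x. dev (Y x (top_index X)) = dev (Y x (top_index (Y x)))) F"
    using eventually_top_index_eq[OF gap] by eventually_elim simp
  ultimately show "((\<lambda>x. dev (Y x (top_index (Y x)))) \<longlongrightarrow> dev (X (top_index X))) F"
    by (rule Lim_transform_eventually)
qed

end

definition spectral_sum :: "'i set \<Rightarrow> ('i \<Rightarrow> real) \<Rightarrow> ('i \<Rightarrow> real) \<Rightarrow> ('i \<Rightarrow> real^2) \<Rightarrow> mat2" where
  "spectral_sum I a b u = (\<Sum>i\<in>I. spectral (a i) (b i) (u i))"

definition det2 :: "real^2 \<Rightarrow> real^2 \<Rightarrow> real" where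
  "det2 u w = u$1 * w$2 - u$2 * w$1"

lemma det2_sq_le:
  assumes "norm u = 1" "norm w = 1" "norm v = 1"
  shows "(det2 u w)^2 \<le> 2 * ((inner u v)^2 + (inner w v)^2)"
proof -
  have "(v$1)^2 + (v$2)^2 = 1" using assms(3) by (simp add: norm_vec2_eq_1_iff)
  then have det: "det2 u w = inner u v * inner w (perp v) - inner u (perp v) * inner w v"
    unfolding det2_def inner_vec2 perp_nth by algebra
  have "\<bar>inner w (perp v)\<bar> \<le> 1" "\<bar>inner u (perp v)\<bar> \<le> 1"
    using Cauchy_Schwarz_ineq2[of w "perp v"] Cauchy_Schwarz_ineq2[of u "perp v"] assms by simp_all
  then have "\<bar>inner u v\<bar> * \<bar>inner w (perp v)\<bar> \<le> \<bar>inner u v\<bar>"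
    "\<bar>inner u (perp v)\<bar> * \<bar>inner w v\<bar> \<le> \<bar>inner w v\<bar>"
    by (simp_all add: mult_right_le_one_le mult_left_le_one_le)
  then have "\<bar>det2 u w\<bar> \<le> \<bar>inner u v\<bar> + \<bar>inner w v\<bar>"
    unfolding det
    using abs_triangle_ineq4[of "inner u v * inner w (perp v)" "inner u (perp v) * inner w v"]
    by (simp add: abs_mult)
  then have "(det2 u w)^2 \<le> (\<bar>inner u v\<bar> + \<bar>inner w v\<bar>)^2"
    by (metis abs_ge_zero power2_abs power_mono)
  also have "\<dots> \<le> 2 * ((inner u v)^2 + (inner w v)^2)"
    using sum_squares_bound[of "\<bar>inner u v\<bar>" "\<bar>inner w v\<bar>"] by (simp add: power2_sum)
  finally show ?thesis .
qed

lemma sym2_spectral_sum: "sym2 (spectral_sum I a b u)"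
  by (simp add: spectral_sum_def sym2_iff spectral_nth mult.commute)

lemma rayleigh_sum: "inner v ((\<Sum>i\<in>I. M i) *v v) = (\<Sum>i\<in>I. inner v (M i *v v))"
  by (induction I rule: infinite_finite_induct)
     (simp_all add: matrix_vector_mult_add_rdistrib inner_add_right)

lemma rayleigh_spectral_sum:
  "inner v (spectral_sum I a b u *v v) = (\<Sum>i\<in>I. inner v (spectral (a i) (b i) (u i) *v v))"
  unfolding spectral_sum_def rayleigh_sum ..

locale spectral_family =
  fixes I :: "'i set" and a b :: "'i \<Rightarrow> real" and u :: "'i \<Rightarrow> real^2"
  assumes fin: "finite I" and unit: "\<And>i. norm (u i) = 1"
    and nonneg: "\<And>i. 0 \<le> b i" and le: "\<And>i. b i \<le> a i"
begin

lemma rayleigh_spectral_nonneg: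
  assumes "norm v = 1"
  shows "0 \<le> inner v (spectral (a i) (b i) (u i) *v v)"
  using rayleigh_spectral_ge[OF unit[of i] assms le[of i]] nonneg[of i] by linarith

lemma rayleigh_spectral_ge_proj:
  assumes "norm v = 1"
  shows "a i * (inner (u i) v)^2 \<le> inner v (spectral (a i) (b i) (u i) *v v)"
proof -
  have "0 \<le> b i * (1 - (inner (u i) v)^2)"
    using nonneg[of i] inner_sq_le_1[OF unit assms, of i] by simp
  then show ?thesis unfolding rayleigh_spectral[OF unit assms] by (simp add: algebra_simps)
qed

lemma eig_max_spectral_sum_ge:
  assumes "k \<in> I"
  shows "a k \<le> eig_max (spectral_sum I a b u)"
proof -
  have "a k = inner (u k) (spectral (a k) (b k) (u k) *v u k)"
    using rayleigh_spectral[OF unit unit] unit[of k] by (simp add: dot_square_norm)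
  also have "\<dots> \<le> (\<Sum>i\<in>I. inner (u k) (spectral (a i) (b i) (u i) *v u k))"
    by (rule member_le_sum) (use assms fin rayleigh_spectral_nonneg[OF unit] in auto)
  also have "\<dots> \<le> eig_max (spectral_sum I a b u)"
    unfolding rayleigh_spectral_sum[symmetric]
    by (rule rayleigh_le_eig_max[OF sym2_spectral_sum unit])
  finally show ?thesis .
qed

lemma eig_max_spectral_sum_le: "eig_max (spectral_sum I a b u) \<le> sum a I"
proof -
  obtain v where v: "norm v = 1" "inner v (spectral_sum I a b u *v v) = eig_max (spectral_sum I a b u)"
    using eig_max_rayleigh_attained[OF sym2_spectral_sum] by blast
  have "eig_max (spectral_sum I a b u) = (\<Sum>i\<in>I. inner v (spectral (a i) (b i) (u i) *v v))"
    unfolding v(2)[symmetric] rayleigh_spectral_sum ..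
  also have "\<dots> \<le> sum a I"
    by (intro sum_mono rayleigh_spectral_le[OF unit v(1) le])
  finally show ?thesis .
qed

lemma eig_min_spectral_sum_le:
  assumes "k \<in> I"
  shows "eig_min (spectral_sum I a b u) \<le> (\<Sum>i\<in>I. if i = k then b i else a i)"
proof -
  have v: "norm (perp (u k)) = 1" using unit by simp
  have "eig_min (spectral_sum I a b u)
      \<le> (\<Sum>i\<in>I. inner (perp (u k)) (spectral (a i) (b i) (u i) *v perp (u k)))"
    unfolding rayleigh_spectral_sum[symmetric]
    by (rule eig_min_le_rayleigh[OF sym2_spectral_sum v])
  also have "\<dots> \<le> (\<Sum>i\<in>I. if i = k then b i else a i)"
  proof (rule sum_mono)
    fix i
    show "inner (perp (u k)) (spectral (a i) (b i) (u i) *v perp (u k)) \<le> (if i = k then b i else a i)"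
      using rayleigh_spectral[OF unit v, of "a k" "b k" k] rayleigh_spectral_le[OF unit v le, of i]
      by auto
  qed
  finally show ?thesis .
qed

lemma eig_min_spectral_sum_ge:
  assumes "k \<in> I"
  shows "b k \<le> eig_min (spectral_sum I a b u)"
proof -
  obtain v where v: "norm v = 1" "inner v (spectral_sum I a b u *v v) = eig_min (spectral_sum I a b u)"
    using eig_min_rayleigh_attained[OF sym2_spectral_sum] by blast
  have "b k \<le> inner v (spectral (a k) (b k) (u k) *v v)"
    by (rule rayleigh_spectral_ge[OF unit v(1) le])
  also have "\<dots> \<le> (\<Sum>i\<in>I. inner v (spectral (a i) (b i) (u i) *v v))"
    by (rule member_le_sum) (use assms fin rayleigh_spectral_nonneg[OF v(1)] in auto)
  also have "\<dots> = eig_min (spectral_sum I a b u)"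
    unfolding v(2)[symmetric] rayleigh_spectral_sum ..
  finally show ?thesis .
qed

text \<open>Two non-aligned major eigenvectors cannot both be nearly orthogonal to a test vector,
  so the smallest eigenvalue sees the smaller of their major eigenvalues.\<close>
lemma eig_min_spectral_sum_ge_det2:
  assumes "k \<in> I" "j \<in> I" "k \<noteq> j"
  shows "(det2 (u k) (u j))^2 / 2 * min (a k) (a j) \<le> eig_min (spectral_sum I a b u)"
proof -
  obtain v where v: "norm v = 1" "inner v (spectral_sum I a b u *v v) = eig_min (spectral_sum I a b u)"
    using eig_min_rayleigh_attained[OF sym2_spectral_sum] by blast
  define e where "e = min (a k) (a j)"
  have "0 \<le> e" using nonneg le by (simp add: e_def order_trans[OF nonneg le])
  then have "(det2 (u k) (u j))^2 / 2 * e \<le> e * (inner (u k) v)^2 + e * (inner (u j) v)^2"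
    using mult_left_mono[OF det2_sq_le[OF unit unit v(1), of k j]] by (simp add: algebra_simps)
  also have "\<dots> \<le> a k * (inner (u k) v)^2 + a j * (inner (u j) v)^2"
    by (intro add_mono mult_right_mono) (simp_all add: e_def)
  also have "\<dots> \<le> (\<Sum>i\<in>{k, j}. inner v (spectral (a i) (b i) (u i) *v v))"
    using assms(3) by (simp add: add_mono rayleigh_spectral_ge_proj[OF v(1)])
  also have "\<dots> \<le> (\<Sum>i\<in>I. inner v (spectral (a i) (b i) (u i) *v v))"
    by (rule sum_mono2) (use assms fin rayleigh_spectral_nonneg[OF v(1)] in auto)
  also have "\<dots> = eig_min (spectral_sum I a b u)"
    unfolding v(2)[symmetric] rayleigh_spectral_sum ..
  finally show ?thesis unfolding e_def .
qed

end

lemma tendsto_spectral_sum_indicator: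
  fixes a b :: "'x \<Rightarrow> 'n::finite \<Rightarrow> real"
  assumes "\<And>i. ((\<lambda>x. a x i) \<longlongrightarrow> (if i = k then 1 else 0)) F" "\<And>i. ((\<lambda>x. b x i) \<longlongrightarrow> 0) F"
  shows "((\<lambda>x. spectral_sum UNIV (a x) (b x) u) \<longlongrightarrow> spectral 1 0 (u k)) F"
proof -
  have "((\<lambda>x. spectral_sum UNIV (a x) (b x) u)
      \<longlongrightarrow> (\<Sum>i\<in>UNIV. spectral (if i = k then 1 else 0) 0 (u i))) F"
    unfolding spectral_sum_def spectral_def
    by (intro tendsto_sum tendsto_add tendsto_scaleR tendsto_diff tendsto_const assms)
  moreover have "(\<Sum>i\<in>UNIV. spectral (if i = k then 1 else 0) 0 (u i))
      = (\<Sum>i\<in>UNIV. if i = k then spectral 1 0 (u k) else 0)"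
    by (intro sum.cong) (auto simp: spectral_def)
  ultimately show ?thesis by simp
qed

lemma det2_eq_0_imp_aligned:
  assumes "norm u = 1" "norm w = 1" "det2 u w = 0"
  shows "u = w \<or> u = - w"
proof -
  have u: "(u$1)^2 + (u$2)^2 = 1" and w: "(w$1)^2 + (w$2)^2 = 1"
    using assms(1,2) by (simp_all add: norm_vec2_eq_1_iff)
  have d: "u$1 * w$2 = u$2 * w$1" using assms(3) by (simp add: det2_def)
  define c where "c = inner u w"
  have "c^2 = 1" unfolding c_def inner_vec2 using u w d by algebra
  moreover have "(u$1 - c * w$1)^2 + (u$2 - c * w$2)^2 = 0"
    unfolding c_def inner_vec2 using u w d \<open>c^2 = 1\<close>[unfolded c_def inner_vec2] by algebra
  then have "u = c *\<^sub>R w" by (simp add: sum_power2_eq_zero_iff vec2_eq_iff)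
  ultimately show ?thesis by (auto simp: power2_eq_1_iff)
qed

lemma ln_div_tendsto_of_exp_bounds:
  assumes "c > 0" and lower: "\<And>m. c * exp (real m * L) \<le> f m" and upper: "\<And>m. f m \<le> C * exp (real m * L)"
  shows "(\<lambda>m. ln (f m) / real m) \<longlonglongrightarrow> L"
proof (rule tendsto_sandwich)
  have "c * exp 0 \<le> C * exp 0" using lower[of 0] upper[of 0] by simp
  then have "C > 0" using \<open>c > 0\<close> by simp
  have "0 < f m" for m
    using lower[of m] \<open>c > 0\<close> by (meson exp_gt_zero mult_pos_pos order.strict_trans2)
  then have "ln (c * exp (real m * L)) \<le> ln (f m)" "ln (f m) \<le> ln (C * exp (real m * L))" for m
    using lower[of m] upper[of m] \<open>c > 0\<close> \<open>C > 0\<close> by simp_all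
  then have "ln c + real m * L \<le> ln (f m)" "ln (f m) \<le> ln C + real m * L" for m
    using \<open>c > 0\<close> \<open>C > 0\<close> by (simp_all add: ln_mult)
  moreover have "(d + real m * L) / real m = L + d / real m" if "m \<ge> 1" for d m
    using that by (simp add: field_simps)
  ultimately have "L + ln c / real m \<le> ln (f m) / real m" "ln (f m) / real m \<le> L + ln C / real m"
    if "m \<ge> 1" for m
    using that by (metis divide_right_mono of_nat_0_le_iff)+
  then show "eventually (\<lambda>m. L + ln c / real m \<le> ln (f m) / real m) sequentially"
    "eventually (\<lambda>m. ln (f m) / real m \<le> L + ln C / real m) sequentially"
    by (auto intro: eventually_sequentiallyI[of 1])
  show "(\<lambda>m. L + ln c / real m) \<longlonglongrightarrow> L" "(\<lambda>m. L + ln C / real m) \<longlonglongrightarrow> L"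
    using tendsto_add[OF tendsto_const lim_const_over_n] by simp_all
qed

definition exp_sum :: "('n::finite \<Rightarrow> mat2) \<Rightarrow> nat \<Rightarrow> mat2" where
  "exp_sum X m = (\<Sum>i\<in>UNIV. mat2_exp (real m *\<^sub>R X i))"

context
  fixes X :: "'n::finite \<Rightarrow> mat2" and u :: "'n \<Rightarrow> real^2"
  assumes unit: "\<And>i. norm (u i) = 1"
    and decomp: "\<And>i. X i = spectral (eig_max (X i)) (eig_min (X i)) (u i)"
begin

lemma exp_sum_eq_spectral_sum:
  "exp_sum X m = spectral_sum UNIV (\<lambda>i. exp (real m * eig_max (X i))) (\<lambda>i. exp (real m * eig_min (X i))) u"
proof -
  have "mat2_exp (real m *\<^sub>R X i) = spectral (exp (real m * eig_max (X i))) (exp (real m * eig_min (X i))) (u i)" for i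
    by (subst decomp) (simp add: scaleR_spectral mat2_exp_spectral[OF unit])
  then show ?thesis by (simp add: exp_sum_def spectral_sum_def)
qed

lemma spectral_family_exp_sum:
  "spectral_family UNIV (\<lambda>i. exp (real m * eig_max (X i))) (\<lambda>i. exp (real m * eig_min (X i))) u"
  by unfold_locales (simp_all add: unit mult_left_mono eig_min_le_eig_max)

lemma eig_max_exp_sum_ge: "exp (real m * top_eig X) \<le> eig_max (exp_sum X m)"
  using spectral_family.eig_max_spectral_sum_ge[OF spectral_family_exp_sum[of m],
      where k="top_index X", simplified]
  by (simp add: exp_sum_eq_spectral_sum eig_max_top_index)

lemma eig_max_exp_sum_le: "eig_max (exp_sum X m) \<le> real CARD('n) * exp (real m * top_eig X)"
proof -
  have "(\<Sum>i\<in>UNIV. exp (real m * eig_max (X i))) \<le> (\<Sum>i\<in>(UNIV::'n set). exp (real m * top_eig X))"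
    by (intro sum_mono) (simp add: mult_left_mono eig_max_le_top_eig)
  then show ?thesis
    using spectral_family.eig_max_spectral_sum_le[OF spectral_family_exp_sum[of m]]
    by (simp add: exp_sum_eq_spectral_sum)
qed

lemma eig_min_exp_sum_le: "eig_min (exp_sum X m) \<le> real CARD('n) * exp (real m * second_eig X)"
proof -
  define k where "k = top_index X"
  have k: "eig_max (X k) = top_eig X" unfolding k_def by (rule eig_max_top_index)
  have "(\<Sum>i\<in>UNIV. if i = k then exp (real m * eig_min (X i)) else exp (real m * eig_max (X i)))
      \<le> (\<Sum>i\<in>(UNIV::'n set). exp (real m * second_eig X))"
  proof (rule sum_mono)
    fix i
    have "eig_slot X (i, i \<noteq> k) \<le> second_eig X" by (rule eig_slot_le_second_eig[OF k]) simp
    then show "(if i = k then exp (real m * eig_min (X i)) else exp (real m * eig_max (X i)))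
        \<le> exp (real m * second_eig X)"
      by (auto simp: eig_slot_def mult_left_mono split: if_splits)
  qed
  then show ?thesis
    using spectral_family.eig_min_spectral_sum_le[OF spectral_family_exp_sum[of m], where k=k,
        simplified]
    by (simp add: exp_sum_eq_spectral_sum)
qed

lemma eig_min_exp_sum_ge:
  assumes not_aligned: "\<And>i j. i \<noteq> j \<Longrightarrow> u i \<noteq> u j \<and> u i \<noteq> - u j"
  obtains c where "c > 0" "\<And>m. c * exp (real m * second_eig X) \<le> eig_min (exp_sum X m)"
proof -
  define k where "k = top_index X"
  have k: "eig_max (X k) = top_eig X" unfolding k_def by (rule eig_max_top_index)
  have ge: "exp (real m * eig_min (X i)) \<le> eig_min (exp_sum X m)" for m i
    using spectral_family.eig_min_spectral_sum_ge[OF spectral_family_exp_sum[of m]]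
    by (simp add: exp_sum_eq_spectral_sum)
  have ge_det2: "(det2 (u i) (u j))^2 / 2 * min (exp (real m * eig_max (X i))) (exp (real m * eig_max (X j)))
      \<le> eig_min (exp_sum X m)" if "i \<noteq> j" for m i j
    using spectral_family.eig_min_spectral_sum_ge_det2[OF spectral_family_exp_sum[of m]] that
    by (simp add: exp_sum_eq_spectral_sum)
  consider "second_eig X \<le> eig_min (X k)" | j where "j \<noteq> k" "second_eig X \<le> eig_max (X j)"
    using second_eig_cases[OF k] by blast
  then show thesis
  proof cases
    case 1
    then have "exp (real m * second_eig X) \<le> eig_min (exp_sum X m)" for m
      using ge[of m k] by (smt (verit) exp_le_cancel_iff mult_left_mono of_nat_0_le_iff)
    then show thesis using that[of 1] by simp
  next
    case 2
    have "det2 (u k) (u j) \<noteq> 0" using det2_eq_0_imp_aligned[OF unit unit] not_aligned 2(1) by metis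
    then have pos: "(det2 (u k) (u j))^2 / 2 > 0" by simp
    have "exp (real m * second_eig X)
        \<le> min (exp (real m * eig_max (X k))) (exp (real m * eig_max (X j)))" for m
      using 2(2) k second_eig_le_top_eig[of X] by (simp add: mult_left_mono)
    then have "(det2 (u k) (u j))^2 / 2 * exp (real m * second_eig X) \<le> eig_min (exp_sum X m)" for m
      using ge_det2[of k j m] 2(1) pos by (smt (verit) mult_left_mono)
    then show thesis using that pos by blast
  qed
qed

lemma dev_exp_sum_tendsto:
  assumes gap: "second_eig X < top_eig X"
  shows "(\<lambda>m. dev (exp_sum X m)) \<longlonglongrightarrow> dev (X (top_index X))"
proof -
  define k where "k = top_index X"
  have k: "eig_max (X k) = top_eig X" unfolding k_def by (rule eig_max_top_index)
  have below: "eig_slot X p < top_eig X" if "p \<noteq> (k, True)" for p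
    using eig_slot_le_second_eig[OF k that] gap by simp
  have exp_lim: "(\<lambda>m. exp (real m * (t - top_eig X))) \<longlonglongrightarrow> 0" if "t < top_eig X" for t
  proof -
    have "(\<lambda>m. exp (t - top_eig X) ^ m) \<longlonglongrightarrow> 0" using that by (intro LIMSEQ_power_zero) simp
    then show ?thesis by (simp add: exp_of_nat_mult)
  qed
  have lim_max: "(\<lambda>m. exp (real m * (eig_max (X i) - top_eig X))) \<longlonglongrightarrow> (if i = k then 1 else 0)" for i
    using exp_lim below[of "(i, True)"] k by (simp add: eig_slot_def)
  have lim_min: "(\<lambda>m. exp (real m * (eig_min (X i) - top_eig X))) \<longlonglongrightarrow> 0" for i
    using exp_lim below[of "(i, False)"] by (simp add: eig_slot_def)
  define E where "E m = exp (- (real m * top_eig X)) *\<^sub>R exp_sum X m" for m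
  have "E = (\<lambda>m. spectral_sum UNIV (\<lambda>i. exp (real m * (eig_max (X i) - top_eig X)))
      (\<lambda>i. exp (real m * (eig_min (X i) - top_eig X))) u)"
    unfolding E_def exp_sum_eq_spectral_sum spectral_sum_def scaleR_sum_right scaleR_spectral
    by (simp add: exp_add[symmetric] algebra_simps)
  moreover have "(\<lambda>m. spectral_sum UNIV (\<lambda>i. exp (real m * (eig_max (X i) - top_eig X)))
      (\<lambda>i. exp (real m * (eig_min (X i) - top_eig X))) u) \<longlonglongrightarrow> spectral 1 0 (u k)"
    by (rule tendsto_spectral_sum_indicator[OF lim_max lim_min])
  ultimately have "E \<longlonglongrightarrow> spectral 1 0 (u k)" by simp
  then have "(\<lambda>m. dev (E m)) \<longlonglongrightarrow> dev (spectral 1 0 (u k))"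
    by (rule tendsto_dev) (simp add: eig_max_spectral eig_min_spectral unit)
  moreover have "dev (E m) = dev (exp_sum X m)" for m by (simp add: E_def dev_scaleR)
  moreover have "eig_min (X k) < eig_max (X k)" using below[of "(k, False)"] k by (simp add: eig_slot_def)
  then have "dev (spectral 1 0 (u k)) = dev (X k)"
    using dev_spectral[OF unit] decomp[of k] by (metis zero_less_one)
  ultimately show ?thesis unfolding k_def by simp
qed

end

lemma Sup_LE_eq_Sup_formula:
  assumes sym: "\<And>i. sym2 (X i)" and gen: "generic_bases X"
  shows "Sup_LE X = Sup_formula X"
proof -
  obtain u where major: "\<And>i. major_eigvec (X i) (u i)"
    and not_aligned: "\<And>i j. i \<noteq> j \<Longrightarrow> u i \<noteq> u j \<and> u i \<noteq> - u j"
    using gen unfolding generic_bases_def by blast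
  have unit: "\<And>i. norm (u i) = 1" using major unfolding major_eigvec_def by blast
  have decomp: "\<And>i. X i = spectral (eig_max (X i)) (eig_min (X i)) (u i)"
    using spectral_major_eigvec sym major by blast
  obtain c where c: "c > 0" "\<And>m. c * exp (real m * second_eig X) \<le> eig_min (exp_sum X m)"
    using eig_min_exp_sum_ge[where X=X and u=u, OF unit decomp not_aligned] by blast
  have sym_sum: "sym2 (exp_sum X m)" for m
    by (simp add: exp_sum_eq_spectral_sum[OF unit decomp] sym2_spectral_sum)
  have "eig_min (exp_sum X m) > 0" for m using c(2)[of m] c(1) by (smt (verit) exp_gt_zero mult_pos_pos)
  then have log: "(1 / real m) *\<^sub>R mat2_log (exp_sum X m)
      = mat_of_dev (ln (eig_max (exp_sum X m)) / real m) (ln (eig_min (exp_sum X m)) / real m)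
          (dev (exp_sum X m))" for m
    by (simp add: mat2_log_eq_mat_of_dev[OF sym_sum] scaleR_mat_of_dev)
  have "(\<lambda>m. ln (eig_max (exp_sum X m)) / real m) \<longlonglongrightarrow> top_eig X"
    using eig_max_exp_sum_ge[OF unit decomp] eig_max_exp_sum_le[OF unit decomp]
    by (intro ln_div_tendsto_of_exp_bounds[of 1]) simp_all
  moreover have "(\<lambda>m. ln (eig_min (exp_sum X m)) / real m) \<longlonglongrightarrow> second_eig X"
    using c eig_min_exp_sum_le[OF unit decomp] by (rule ln_div_tendsto_of_exp_bounds)
  ultimately have "(\<lambda>m. (1 / real m) *\<^sub>R mat2_log (exp_sum X m)) \<longlonglongrightarrow> Sup_formula X"
    unfolding log Sup_formula_def
    by (rule tendsto_mat_of_dev[where C=2, OF _ _ second_eig_le_top_eig _ dev_exp_sum_tendsto[OF unit decomp]])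
       (simp_all add: norm_dev_le sym_sum)
  then show ?thesis unfolding Sup_LE_def exp_sum_def by (rule limI)
qed

definition rot :: "real \<Rightarrow> real^2 \<Rightarrow> real^2" where
  "rot t u = vector [cos t * u$1 - sin t * u$2, sin t * u$1 + cos t * u$2]"

lemma rot_nth [simp]:
  "rot t u $ 1 = cos t * u$1 - sin t * u$2" "rot t u $ 2 = sin t * u$1 + cos t * u$2"
  by (simp_all add: rot_def)

lemma norm_rot [simp]: "norm (rot t u) = norm u"
proof -
  have "(sin t)^2 + (cos t)^2 = 1" by simp
  then have "(rot t u $ 1)^2 + (rot t u $ 2)^2 = (u$1)^2 + (u$2)^2" unfolding rot_nth by algebra
  then show ?thesis by (simp add: norm_eq_sqrt_inner inner_vec2 power2_eq_square)
qed

lemma tendsto_rot: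
  fixes g :: "'a::t2_space \<Rightarrow> real"
  assumes "(g \<longlongrightarrow> 0) F"
  shows "((\<lambda>x. rot (g x) u) \<longlongrightarrow> u) F"
proof -
  have "((\<lambda>x. rot (g x) u $ 1) \<longlongrightarrow> rot 0 u $ 1) F" "((\<lambda>x. rot (g x) u $ 2) \<longlongrightarrow> rot 0 u $ 2) F"
    unfolding rot_nth by (intro tendsto_intros assms)+
  then have "((\<lambda>x. rot (g x) u $ i) \<longlongrightarrow> rot 0 u $ i) F" for i
    using exhaust_2[of i] by (elim disjE) simp_all
  then have "((\<lambda>x. rot (g x) u) \<longlongrightarrow> rot 0 u) F" by (rule vec_tendstoI)
  moreover have "rot 0 u = u" by (simp add: vec2_eq_iff)
  ultimately show ?thesis by simp
qed

lemma tendsto_outer: "(g \<longlongrightarrow> u) F \<Longrightarrow> ((\<lambda>x. outer (g x)) \<longlongrightarrow> outer u) F"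
  unfolding outer_def by (intro tendsto_vec_lambda tendsto_mult tendsto_vec_nth)

lemma det2_rot: "det2 (rot s u) (rot t w) = cos (t - s) * det2 u w + sin (t - s) * inner u w"
  unfolding det2_def inner_vec2 rot_nth cos_diff sin_diff by algebra

lemma det2_sq_add_inner_sq:
  assumes "norm u = 1" "norm w = 1"
  shows "(det2 u w)^2 + (inner u w)^2 = 1"
  using assms unfolding det2_def inner_vec2 norm_vec2_eq_1_iff by algebra

lemma det2_ne_0_imp_not_aligned: "det2 u w \<noteq> 0 \<Longrightarrow> u \<noteq> w \<and> u \<noteq> - w"
  by (auto simp: det2_def algebra_simps)

lemma eventually_cos_sin_ne_0:
  fixes c d e :: real
  assumes "d^2 + e^2 = 1" "c \<noteq> 0"
  shows "eventually (\<lambda>t. cos (c * t) * d + sin (c * t) * e \<noteq> 0) (at_right 0)"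
proof (cases "d = 0")
  case False
  have "((\<lambda>t. cos (c * t) * d + sin (c * t) * e) \<longlongrightarrow> cos (c * 0) * d + sin (c * 0) * e) (at_right 0)"
    by (intro tendsto_intros)
  then show ?thesis using False by (intro tendsto_imp_eventually_ne) simp_all
next
  case True
  then have "e \<noteq> 0" using assms(1) by auto
  have "sin (c * t) \<noteq> 0" if "0 < t" "t < pi / \<bar>c\<bar>" for t
  proof -
    have "0 < \<bar>c\<bar> * t" "\<bar>c\<bar> * t < pi" using that assms(2) by (simp_all add: field_simps)
    then have "sin (\<bar>c\<bar> * t) \<noteq> 0" using sin_gt_zero by (metis less_irrefl)
    then show ?thesis by (cases "c \<ge> 0") simp_all
  qed
  then show ?thesis
    unfolding eventually_at_right_field using True \<open>e \<noteq> 0\<close> assms(2)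
    by (intro exI[of _ "pi / \<bar>c\<bar>"]) simp
qed

lemma eventually_rotations_not_aligned:
  fixes u :: "'n::finite \<Rightarrow> real^2" and c :: "'n \<Rightarrow> real"
  assumes unit: "\<And>i. norm (u i) = 1" and "inj c"
  shows "eventually (\<lambda>t. \<forall>i j. i \<noteq> j \<longrightarrow> det2 (rot (c i * t) (u i)) (rot (c j * t) (u j)) \<noteq> 0)
    (at_right 0)"
proof -
  have "eventually (\<lambda>t. det2 (rot (c i * t) (u i)) (rot (c j * t) (u j)) \<noteq> 0) (at_right 0)"
    if "i \<noteq> j" for i j
  proof -
    have "c j - c i \<noteq> 0" using \<open>inj c\<close> that by (simp add: inj_eq)
    from eventually_cos_sin_ne_0[OF det2_sq_add_inner_sq[OF unit unit] this]
    show ?thesis by eventually_elim (simp add: det2_rot algebra_simps)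
  qed
  then have "eventually (\<lambda>t. \<forall>p :: 'n \<times> 'n. fst p \<noteq> snd p \<longrightarrow>
      det2 (rot (c (fst p) * t) (u (fst p))) (rot (c (snd p) * t) (u (snd p))) \<noteq> 0) (at_right 0)"
    by (intro eventually_all_finite) (auto intro: eventually_mono)
  then show ?thesis by eventually_elim auto
qed

lemma converges_planar_spectral:
  assumes unit: "\<And>\<delta> i. norm (v \<delta> i) = 1" "\<And>i. norm (u i) = 1"
    and decomp: "\<And>i. X i = spectral (eig_max (X i)) (eig_min (X i)) (u i)"
    and lim: "\<And>i. ((\<lambda>\<delta>. v \<delta> i) \<longlongrightarrow> u i) (at_right 0)"
  shows "converges_planar (\<lambda>\<delta> i. spectral (eig_max (X i)) (eig_min (X i)) (v \<delta> i)) X"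
proof -
  have "((\<lambda>\<delta>. spectral (eig_max (X i)) (eig_min (X i)) (v \<delta> i))
      \<longlongrightarrow> spectral (eig_max (X i)) (eig_min (X i)) (u i)) (at_right 0)" for i
    unfolding spectral_def by (intro tendsto_intros tendsto_outer lim)
  then have lim_X: "((\<lambda>\<delta>. spectral (eig_max (X i)) (eig_min (X i)) (v \<delta> i)) \<longlongrightarrow> X i) (at_right 0)" for i
    unfolding decomp[symmetric] .
  have "is_eigenvalue2 (spectral (eig_max (X i)) (eig_min (X i)) (u i)) t
      \<longleftrightarrow> t = eig_max (X i) \<or> t = eig_min (X i)" for i t
    by (rule is_eigenvalue2_spectral[OF unit(2)])
  then have "is_eigenvalue2 (X i) t \<longleftrightarrow> t = eig_max (X i) \<or> t = eig_min (X i)" for i t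
    unfolding decomp[symmetric] .
  then have "same_eigenvalues (spectral (eig_max (X i)) (eig_min (X i)) (v \<delta> i)) (X i)" for \<delta> i
    unfolding same_eigenvalues_def is_eigenvalue2_spectral[OF unit(1)] by simp
  then show ?thesis
    unfolding converges_planar_def using lim_X by (simp add: sym2_spectral)
qed

lemma exists_generic_planar_family:
  fixes X :: "'n::finite \<Rightarrow> mat2"
  assumes "\<And>i. sym2 (X i)"
  obtains F where "converges_planar F X" "\<And>\<delta>. \<delta> > 0 \<Longrightarrow> generic_bases (F \<delta>)"
proof -
  have "\<exists>w. norm w = 1 \<and> X i = spectral (eig_max (X i)) (eig_min (X i)) w" for i
    using sym2_spectral_decomp[OF assms[of i]] by blast
  then obtain u where unit: "\<And>i. norm (u i) = 1"
    and decomp: "\<And>i. X i = spectral (eig_max (X i)) (eig_min (X i)) (u i)"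
    by metis
  obtain f :: "'n \<Rightarrow> nat" where "inj f" using ex_inj by blast
  then have "inj (\<lambda>i. real (f i))" by (simp add: inj_on_def)
  from eventually_rotations_not_aligned[where u=u, OF unit this]
  obtain eps :: real where "eps > 0" and eps: "\<forall>t::real>0. t < eps \<longrightarrow>
      (\<forall>i j. i \<noteq> j \<longrightarrow> det2 (rot (f i * t) (u i)) (rot (f j * t) (u j)) \<noteq> 0)"
    unfolding eventually_at_right_field by auto
  \<comment> \<open>Capping the angle keeps every \<open>\<delta> > 0\<close> in the range where the axes are non-aligned.\<close>
  define v where "v \<delta> i = rot (f i * min \<delta> (eps/2)) (u i)" for \<delta> i
  define F where "F \<delta> i = spectral (eig_max (X i)) (eig_min (X i)) (v \<delta> i)" for \<delta> i
  have unit_v: "norm (v \<delta> i) = 1" for \<delta> i by (simp add: v_def unit)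
  have "((\<lambda>\<delta>. v \<delta> i) \<longlongrightarrow> u i) (at_right 0)" for i
  proof -
    have "((\<lambda>\<delta>::real. f i * min \<delta> (eps/2)) \<longlongrightarrow> f i * min 0 (eps/2)) (at_right 0)"
      by (intro tendsto_intros)
    then show ?thesis unfolding v_def using \<open>eps > 0\<close> by (intro tendsto_rot) simp
  qed
  then have "converges_planar F X"
    unfolding F_def by (rule converges_planar_spectral[OF unit_v unit decomp])
  moreover have "generic_bases (F \<delta>)" if "\<delta> > 0" for \<delta>
    unfolding generic_bases_def
  proof (intro exI[of _ "v \<delta>"] conjI allI impI)
    show "major_eigvec (F \<delta> i) (v \<delta> i)" for i
      unfolding F_def by (rule major_eigvec_spectral[OF unit_v eig_min_le_eig_max])
    have "0 < min \<delta> (eps/2)" "min \<delta> (eps/2) < eps" using that \<open>eps > 0\<close> by auto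
    then have "det2 (v \<delta> i) (v \<delta> j) \<noteq> 0" if "i \<noteq> j" for i j
      using eps that unfolding v_def by simp
    then show "v \<delta> i \<noteq> v \<delta> j" "v \<delta> i \<noteq> - v \<delta> j" if "i \<noteq> j" for i j
      using det2_ne_0_imp_not_aligned that by blast+
  qed
  ultimately show ?thesis using that by blast
qed

lemma Sup_RLE_eq_Sup_formula:
  fixes X :: "'n::finite \<Rightarrow> mat2"
  assumes sym: "\<And>i. sym2 (X i)"
  shows "Sup_RLE X = Sup_formula X"
proof (cases "generic_bases X")
  case True
  show ?thesis unfolding Sup_RLE_def if_P[OF True] by (rule Sup_LE_eq_Sup_formula[OF sym True])
next
  case False
  have lim: "((\<lambda>\<delta>. Sup_LE (F \<delta>)) \<longlongrightarrow> Sup_formula X) (at_right 0)"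
    if F: "converges_planar F X" "\<forall>\<delta>>0. generic_bases (F \<delta>)" for F :: "real \<Rightarrow> 'n \<Rightarrow> mat2"
  proof -
    have sym: "\<forall>i. sym2 (F \<delta> i)" if "\<delta> > 0" for \<delta>
      using F(1) that unfolding converges_planar_def by blast
    then have sym_F: "eventually (\<lambda>\<delta>. \<forall>i. sym2 (F \<delta> i)) (at_right 0)"
      using eventually_at_right_less[of 0] by (auto elim: eventually_mono)
    have "((\<lambda>\<delta>. Sup_formula (F \<delta>)) \<longlongrightarrow> Sup_formula X) (at_right 0)"
      using F(1) sym_F unfolding converges_planar_def by (intro tendsto_Sup_formula) simp_all
    moreover have "Sup_formula (F \<delta>) = Sup_LE (F \<delta>)" if "\<delta> > 0" for \<delta>
      using Sup_LE_eq_Sup_formula[of "F \<delta>"] sym[OF that] F(2) that by simp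
    then have "eventually (\<lambda>\<delta>. Sup_formula (F \<delta>) = Sup_LE (F \<delta>)) (at_right 0)"
      using eventually_at_right_less[of 0] by (auto elim: eventually_mono)
    ultimately show ?thesis by (rule Lim_transform_eventually)
  qed
  obtain F0 where F0: "converges_planar F0 X" "\<And>\<delta>. \<delta> > 0 \<Longrightarrow> generic_bases (F0 \<delta>)"
    using exists_generic_planar_family[where X=X, OF sym] by blast
  have "(THE M. \<forall>F. converges_planar F X \<and> (\<forall>\<delta>>0. generic_bases (F \<delta>)) \<longrightarrow>
      ((\<lambda>\<delta>. Sup_LE (F \<delta>)) \<longlongrightarrow> M) (at_right 0)) = Sup_formula X"
  proof (rule the_equality)
    show "\<forall>F. converges_planar F X \<and> (\<forall>\<delta>>0. generic_bases (F \<delta>)) \<longrightarrow>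
        ((\<lambda>\<delta>. Sup_LE (F \<delta>)) \<longlongrightarrow> Sup_formula X) (at_right 0)"
      using lim by simp
  next
    fix M
    assume "\<forall>F. converges_planar F X \<and> (\<forall>\<delta>>0. generic_bases (F \<delta>)) \<longrightarrow>
      ((\<lambda>\<delta>. Sup_LE (F \<delta>)) \<longlongrightarrow> M) (at_right 0)"
    then have "((\<lambda>\<delta>. Sup_LE (F0 \<delta>)) \<longlongrightarrow> M) (at_right 0)" using F0 by simp
    from tendsto_unique[OF trivial_limit_at_right_real this lim] F0 show "M = Sup_formula X" by simp
  qed
  then show ?thesis unfolding Sup_RLE_def if_not_P[OF False] .
qed

theorem lemma9:
  shows "continuous_on {Xs :: mat2^'n::finite. \<forall>i. sym2 (Xs $ i)}
           (\<lambda>Xs. Sup_RLE (\<lambda>i. Xs $ i))"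
proof (rule continuous_on_eq)
  show "continuous_on {Xs :: mat2^'n. \<forall>i. sym2 (Xs $ i)} (\<lambda>Xs. Sup_formula (\<lambda>i. Xs $ i))"
    unfolding continuous_on_def
    by (intro ballI tendsto_Sup_formula tendsto_vec_nth tendsto_ident_at)
       (simp add: eventually_at_filter)
  show "Sup_formula (\<lambda>i. Xs $ i) = Sup_RLE (\<lambda>i. Xs $ i)" if "Xs \<in> {Xs. \<forall>i. sym2 (Xs $ i)}" for Xs
    using Sup_RLE_eq_Sup_formula[of "\<lambda>i. Xs $ i"] that by simp
qed

end
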